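(* For $n=0,1,2,\ldots$ let $R_n=\sum_{k=0}^n\binom{n}{k}\binom{n+k}{k}\frac{1}{2k-1}$. The sequence $\{\sqrt[n]{R_n}\}_{n=5}^\infty$ is strictly log-concave; equivalently, the sequence $\left\{\frac{\sqrt[n+1]{R_{n+1}}}{\sqrt[n]{R_n}}\right\}_{n=5}^\infty$ is strictly decreasing.
   Context: A sequence $\{z_n\}$ of positive numbers is strictly log-concave if $z_{n-1}z_{n+1}<z_n^2$ for all indices $n$ for which $z_{n-1},z_n,z_{n+1}$ belong to the sequence. *)

theory Defs
  imports Complex_Main
begin

definition R :: "nat \<Rightarrow> real" where
  "R n = (\<Sum>k=0..n. real (n choose k) * real ((n + k) choose k) / (2 * real k - 1))"

definition strictly_log_concave_from :: "nat \<Rightarrow> (nat \<Rightarrow> real) \<Rightarrow> bool" where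
  "strictly_log_concave_from m z \<longleftrightarrow>
     (\<forall>n\<ge>m. z n > 0) \<and> (\<forall>n. n \<ge> Suc m \<longrightarrow> z (n - 1) * z (n + 1) < (z n)^2)"

end

theory Submission
  imports Defs
begin

text \<open>Zeilberger's algorithm gives the recurrence
  (n+3) R(n+3) = (7n+13) R(n+2) - (7n+15) R(n+1) + (n+1) R(n), whose characteristic roots at
  infinity are 1 and 3 \<plusminus> 2\<surd>2. Inducting along it traps the ratio \<rho>(n) = R(n+1)/R(n) between
  two rational functions of n increasing to 3 + 2\<surd>2; hence \<rho> is increasing and
  n(n+1)(\<rho>(n+1)/\<rho>(n) - 1) \<le> 23/10. With S(n) = n ln R(n+1) - (n+1) ln R(n)
  (log_root_gap R), strict log-concavity of ln R(n) / n amounts to (n-1) S(n) < (n+1) S(n-1). Since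
  S(n) - S(n-1) = n ln (\<rho>(n)/\<rho>(n-1)) \<le> n (\<rho>(n)/\<rho>(n-1) - 1), this follows from S being
  increasing and 2 S(5) > 23/10.\<close>

definition succ_ratio :: "(nat \<Rightarrow> real) \<Rightarrow> nat \<Rightarrow> real" where
  "succ_ratio x k = x (Suc k) / x k"

definition log_root_gap :: "(nat \<Rightarrow> real) \<Rightarrow> nat \<Rightarrow> real" where
  "log_root_gap x k = real k * ln (x (Suc k)) - (real k + 1) * ln (x k)"

lemma log_root_gap_Suc:
  assumes "x k > 0" "x (Suc k) > 0" "x (Suc (Suc k)) > 0"
  shows "log_root_gap x (Suc k)
    = log_root_gap x k + (real k + 1) * (ln (succ_ratio x (Suc k)) - ln (succ_ratio x k))"
  using assms by (simp add: log_root_gap_def succ_ratio_def ln_div algebra_simps)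

lemma log_root_gap_mono:
  assumes pos: "\<forall>k\<ge>m. x k > 0" and mono: "\<forall>k\<ge>m. succ_ratio x k \<le> succ_ratio x (Suc k)"
  shows "k \<ge> m \<Longrightarrow> log_root_gap x m \<le> log_root_gap x k"
proof (induction k rule: nat_induct_at_least)
  case (Suc k)
  have "succ_ratio x k > 0" using pos Suc.hyps by (simp add: succ_ratio_def)
  then have "ln (succ_ratio x k) \<le> ln (succ_ratio x (Suc k))" using mono Suc.hyps by (simp add: ln_mono)
  then have "log_root_gap x k \<le> log_root_gap x (Suc k)"
    using log_root_gap_Suc[of x k] pos Suc.hyps by simp
  then show ?case using Suc.IH by linarith
qed simp

lemma root_log_concave_iff_log_root_gap:
  assumes "k \<ge> 1" "x k > 0" "x (Suc k) > 0" "x (Suc (Suc k)) > 0"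
  shows "root k (x k) * root (Suc (Suc k)) (x (Suc (Suc k))) < (root (Suc k) (x (Suc k)))\<^sup>2
    \<longleftrightarrow> real k * log_root_gap x (Suc k) < (real k + 2) * log_root_gap x k"
proof -
  define N where "N = real k + 1"
  have N: "N \<ge> 2" using assms(1) N_def by simp
  have "root k (x k) * root (Suc (Suc k)) (x (Suc (Suc k))) < (root (Suc k) (x (Suc k)))\<^sup>2
    \<longleftrightarrow> ln (x k) / (N - 1) + ln (x (Suc (Suc k))) / (N + 1) < 2 * ln (x (Suc k)) / N"
    using assms by (simp add: N_def ln_mult ln_root ln_realpow real_root_gt_zero add.commute
      flip: ln_less_cancel_iff)
  also have "\<dots> \<longleftrightarrow> N * (N + 1) * ln (x k) + N * (N - 1) * ln (x (Suc (Suc k)))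
      < 2 * (N - 1) * (N + 1) * ln (x (Suc k))"
    using N mult_mono[OF N N] by (simp add: field_simps)
  also have "\<dots> \<longleftrightarrow> real k * log_root_gap x (Suc k) < (real k + 2) * log_root_gap x k"
    by (simp add: log_root_gap_def N_def algebra_simps)
  finally show ?thesis .
qed

lemma strictly_log_concave_roots_if_slow_ratio_growth:
  fixes x :: "nat \<Rightarrow> real" and c :: real
  assumes "m \<ge> 1" and pos: "\<forall>k\<ge>m. x k > 0"
    and mono: "\<forall>k\<ge>m. succ_ratio x k \<le> succ_ratio x (Suc k)"
    and slow: "\<forall>k\<ge>m. real k * (real k + 1) * (succ_ratio x (Suc k) / succ_ratio x k - 1) \<le> c"
    and gap: "c < 2 * log_root_gap x m"
  shows "strictly_log_concave_from m (\<lambda>n. root n (x n))"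
  unfolding strictly_log_concave_from_def
proof (intro conjI allI impI)
  fix n assume "n \<ge> m"
  then show "root n (x n) > 0" using pos \<open>m \<ge> 1\<close> by (intro real_root_gt_zero) auto
next
  fix n assume "n \<ge> Suc m"
  then obtain k where n: "n = Suc k" and k: "k \<ge> m" by (cases n) auto
  have x_pos: "x k > 0" "x (Suc k) > 0" "x (Suc (Suc k)) > 0" using pos k by auto
  have ratio_pos: "succ_ratio x k > 0" "succ_ratio x (Suc k) > 0"
    using x_pos by (simp_all add: succ_ratio_def)
  have "ln (succ_ratio x (Suc k)) - ln (succ_ratio x k) \<le> succ_ratio x (Suc k) / succ_ratio x k - 1"
    using ratio_pos ln_le_minus_one[of "succ_ratio x (Suc k) / succ_ratio x k"] by (simp add: ln_div)
  then have "real k * (real k + 1) * (ln (succ_ratio x (Suc k)) - ln (succ_ratio x k)) \<le> c"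
    using slow k by (smt (verit, best) mult_left_mono of_nat_0_le_iff mult_nonneg_nonneg)
  also have "\<dots> < 2 * log_root_gap x k" using gap log_root_gap_mono[OF pos mono k] by linarith
  moreover have "real k * log_root_gap x (Suc k) = real k * log_root_gap x k
      + real k * (real k + 1) * (ln (succ_ratio x (Suc k)) - ln (succ_ratio x k))"
    unfolding log_root_gap_Suc[OF x_pos] by (simp add: algebra_simps)
  ultimately have "real k * log_root_gap x (Suc k) < (real k + 2) * log_root_gap x k"
    by (simp add: algebra_simps)
  then show "root (n - 1) (x (n - 1)) * root (n + 1) (x (n + 1)) < (root n (x n))\<^sup>2"
    using root_log_concave_iff_log_root_gap[OF _ x_pos] k \<open>m \<ge> 1\<close> n by simp
qed

lemma ln_ge_two_minus_three_div:
  fixes y :: real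
  assumes "y > 0"
  shows "2 - 3 / y \<le> ln y"
proof -
  have "ln (exp 1 / y) \<le> exp 1 / y - 1" using assms by (intro ln_le_minus_one) simp
  moreover have "exp 1 / y \<le> 3 / y" using assms exp_le by (simp add: divide_right_mono)
  ultimately show ?thesis using assms by (simp add: ln_div)
qed

definition R_summand :: "nat \<Rightarrow> nat \<Rightarrow> real" where
  "R_summand n k = real (n choose k) * real ((n + k) choose k) / (2 * real k - 1)"

lemma R_eq_sum_R_summand:
  assumes "n \<le> N"
  shows "R n = (\<Sum>k<Suc N. R_summand n k)"
proof -
  have "R n = (\<Sum>k<Suc n. R_summand n k)"
    unfolding R_def R_summand_def by (simp add: atLeast0AtMost lessThan_Suc_atMost)
  also have "\<dots> = (\<Sum>k<Suc N. R_summand n k)"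
    by (rule sum.mono_neutral_left) (use assms in \<open>auto simp: R_summand_def binomial_eq_0\<close>)
  finally show ?thesis .
qed

lemma real_binomial_absorb_comp:
  "real (Suc m) * real (m choose k) = (real (Suc m) - real k) * real (Suc m choose k)"
proof (cases "k \<le> Suc m")
  case True
  have "real (Suc m - k) * real (Suc m choose k) = real (Suc m) * real (m choose k)"
    by (metis binomial_absorb_comp diff_Suc_1 of_nat_mult)
  with True show ?thesis by (simp add: of_nat_diff)
qed (simp add: binomial_eq_0)

lemma R_certificate_identity:
  fixes N K a b :: real
  assumes "N \<ge> 0" "K \<ge> 1"
  shows "- (N + 1) * ((a * (N + 3 - K) / (N + 3)) * (N + 2 - K) / (N + 2) * (N + 1 - K) / (N + 1) * b / (2 * K - 1)) +
    (7 * N + 15) * ((a * (N + 3 - K) / (N + 3)) * (N + 2 - K) / (N + 2) * (b * (N + 1 + K) / (N + 1)) / (2 * K - 1)) -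
    (7 * N + 13) * ((a * (N + 3 - K) / (N + 3)) * ((b * (N + 1 + K) / (N + 1)) * (N + 2 + K) / (N + 2)) / (2 * K - 1)) +
    (N + 3) * (a * ((b * (N + 1 + K) / (N + 1)) * (N + 2 + K) / (N + 2) * (N + 3 + K) / (N + 3)) / (2 * K - 1)) =
    - 4 * (a * (N + 3 - K) / (N + 3)) * (b * (N + 1 + K) / (N + 1)) + 4 * (K * a / (N + 3)) * (K * b / (N + 1))"
proof -
  have "2*K - 1 \<noteq> 0" "N+1 \<noteq> 0" "N+2 \<noteq> 0" "N+3 \<noteq> 0" using assms by auto
  then show ?thesis by (simp add: divide_simps) (simp add: algebra_simps)
qed

text \<open>Zeilberger's certificate: the left side is \<open>G (j+2) - G (j+1)\<close> for
  \<open>G k = -4 C(n+2, k-1) C(n+k, k-1)\<close>.\<close>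

lemma R_summand_telescoping:
  "-(real n+1) * R_summand n (Suc j) + (7*real n+15) * R_summand (n+1) (Suc j)
     - (7*real n+13) * R_summand (n+2) (Suc j) + (real n+3) * R_summand (n+3) (Suc j)
   = -4 * real ((n+2) choose (Suc j)) * real ((n + Suc (Suc j)) choose (Suc j))
     + 4 * real ((n+2) choose j) * real ((n + Suc j) choose j)"
proof -
  define k where "k = Suc j"
  define N where "N = real n"
  define K where "K = real k"
  define \<alpha> where "\<alpha> = real ((n+3) choose k)"
  define \<beta> where "\<beta> = real ((n+k) choose k)"
  have c2: "real ((n+2) choose k) = \<alpha> * (N+3-K)/(N+3)"
    using real_binomial_absorb_comp[of "n+2" k] unfolding \<alpha>_def N_def K_def
    by (simp add: field_simps eval_nat_numeral del: binomial_Suc_Suc)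
  have c1: "real ((n+1) choose k) = real ((n+2) choose k) * (N+2-K)/(N+2)"
    using real_binomial_absorb_comp[of "n+1" k] unfolding N_def K_def
    by (simp add: field_simps del: binomial_Suc_Suc)
  have c0: "real (n choose k) = real ((n+1) choose k) * (N+1-K)/(N+1)"
    using real_binomial_absorb_comp[of n k] unfolding N_def K_def
    by (simp add: field_simps del: binomial_Suc_Suc)
  have b1: "real ((n+1+k) choose k) = \<beta> * (N+1+K)/(N+1)"
    using real_binomial_absorb_comp[of "n+k" k] unfolding \<beta>_def N_def K_def
    by (simp add: field_simps del: binomial_Suc_Suc)
  have b2: "real ((n+2+k) choose k) = real ((n+1+k) choose k) * (N+2+K)/(N+2)"
    using real_binomial_absorb_comp[of "n+1+k" k] unfolding N_def K_def
    by (simp add: field_simps del: binomial_Suc_Suc)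
  have b3: "real ((n+3+k) choose k) = real ((n+2+k) choose k) * (N+3+K)/(N+3)"
    using real_binomial_absorb_comp[of "n+2+k" k] unfolding N_def K_def
    by (simp add: field_simps eval_nat_numeral del: binomial_Suc_Suc)
  have e1: "real ((n+2) choose j) = K * \<alpha> / (N+3)"
    using Suc_times_binomial[of j "n+2"] unfolding \<alpha>_def N_def K_def k_def
    by (simp add: field_simps eval_nat_numeral flip: of_nat_mult del: binomial_Suc_Suc)
  have e2: "real ((n + k) choose j) = K * \<beta> / (N+1)"
    using Suc_times_binomial_add[of j n] unfolding \<beta>_def N_def K_def k_def
    by (simp add: field_simps add.commute flip: of_nat_mult del: binomial_Suc_Suc)
  have f: "R_summand n k = real (n choose k) * \<beta> / (2*K-1)"
    "R_summand (n+1) k = real ((n+1) choose k) * real ((n+1+k) choose k) / (2*K-1)"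
    "R_summand (n+2) k = real ((n+2) choose k) * real ((n+2+k) choose k) / (2*K-1)"
    "R_summand (n+3) k = \<alpha> * real ((n+3+k) choose k) / (2*K-1)"
    unfolding R_summand_def \<alpha>_def \<beta>_def K_def by (simp_all add: ac_simps)
  have shift: "real ((n + Suc k) choose k) = real ((n+1+k) choose k)" by (simp add: ac_simps)
  have "N \<ge> 0" "K \<ge> 1" unfolding N_def K_def k_def by simp_all
  then show ?thesis
    unfolding k_def[symmetric] shift e1 e2 f b3 b2 b1 c0 c1 c2 N_def[symmetric]
    by (rule R_certificate_identity)
qed

lemma R_recurrence:
  "(real n + 3) * R (n + 3) =
     (7 * real n + 13) * R (n + 2) - (7 * real n + 15) * R (n + 1) + (real n + 1) * R n"
proof -
  define G where "G j = (if j = 0 then 0 else -4 * real ((n+2) choose (j-1)) * real ((n+j) choose (j-1)))" for j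
  define T where "T k = -(real n+1) * R_summand n k + (7*real n+15) * R_summand (n+1) k
     - (7*real n+13) * R_summand (n+2) k + (real n+3) * R_summand (n+3) k" for k
  have T_telescopes: "T k = G (Suc k) - G k" for k
  proof (cases k)
    case (Suc j)
    then show ?thesis unfolding T_def G_def using R_summand_telescoping[of n j] by simp
  qed (simp add: T_def G_def R_summand_def)
  have "(\<Sum>k<Suc (n+3). T k) = G (Suc (n+3)) - G 0"
    unfolding T_telescopes by (rule sum_lessThan_telescope)
  also have "\<dots> = 0" unfolding G_def by (simp add: binomial_eq_0)
  finally have "(\<Sum>k<Suc (n+3). T k) = 0" .
  moreover have "(\<Sum>k<Suc (n+3). T k) = -(real n+1) * R n + (7*real n+15) * R (n+1)
      - (7*real n+13) * R (n+2) + (real n+3) * R (n+3)"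
    unfolding T_def
    by (simp add: R_eq_sum_R_summand[of _ "n+3"] sum.distrib sum_subtractf sum_distrib_left
        del: sum.lessThan_Suc)
  ultimately show ?thesis by linarith
qed

lemma R_0: "R 0 = -1" by (simp add: R_def)
lemma R_1: "R 1 = 1" by (simp add: R_def)
lemma R_2: "R 2 = 7" by (simp add: R_def eval_nat_numeral)
lemma R_3: "R 3 = 25" using R_recurrence[of 0] R_0 R_1 R_2 by (simp add: eval_nat_numeral)
lemma R_4: "R 4 = 87" using R_recurrence[of 1] R_1 R_2 R_3 by (simp add: eval_nat_numeral)
lemma R_5: "R 5 = 329" using R_recurrence[of 2] R_2 R_3 R_4 by (simp add: eval_nat_numeral)
lemma R_6: "R 6 = 1359" using R_recurrence[of 3] R_3 R_4 R_5 by (simp add: eval_nat_numeral)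
lemma R_7: "R 7 = 6001" using R_recurrence[of 4] R_4 R_5 R_6 by (simp add: eval_nat_numeral)
lemma R_8: "R 8 = 27759" using R_recurrence[of 5] R_5 R_6 R_7 by (simp add: eval_nat_numeral)
lemma R_9: "R 9 = 132689" using R_recurrence[of 6] R_6 R_7 R_8 by (simp add: eval_nat_numeral)
lemma R_10: "R 10 = 649815" using R_recurrence[of 7] R_7 R_8 R_9 by (simp add: eval_nat_numeral)

lemma recurrence_ratio_lower_step:
  fixes a b c d p q s t hi\<^sub>0 lo\<^sub>1 lo\<^sub>2 :: real
  assumes rec: "t * d = p * c - q * b + s * a" and "t > 0" "s \<ge> 0" "q * hi\<^sub>0 \<ge> s"
    and "hi\<^sub>0 > 0" "lo\<^sub>1 > 0" "c \<ge> 0" "b \<le> hi\<^sub>0 * a" "lo\<^sub>1 * b \<le> c"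
    and "t * lo\<^sub>2 * lo\<^sub>1 * hi\<^sub>0 \<le> p * lo\<^sub>1 * hi\<^sub>0 - q * hi\<^sub>0 + s"
  shows "lo\<^sub>2 * c \<le> d"
proof -
  have "hi\<^sub>0 * lo\<^sub>1 * (t * (d - lo\<^sub>2 * c)) = s * lo\<^sub>1 * (hi\<^sub>0 * a - b)
      + (q * hi\<^sub>0 - s) * (c - lo\<^sub>1 * b) + c * (p * lo\<^sub>1 * hi\<^sub>0 - q * hi\<^sub>0 + s - t * lo\<^sub>2 * lo\<^sub>1 * hi\<^sub>0)"
    using rec by algebra
  also have "\<dots> \<ge> 0" using assms by (intro add_nonneg_nonneg mult_nonneg_nonneg) auto
  finally show ?thesis
    using assms mult_pos_pos[OF \<open>hi\<^sub>0 > 0\<close> \<open>lo\<^sub>1 > 0\<close>] by (auto simp: zero_le_mult_iff)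
qed

lemma recurrence_ratio_upper_step:
  fixes a b c d p q s t lo\<^sub>0 hi\<^sub>1 hi\<^sub>2 :: real
  assumes rec: "t * d = p * c - q * b + s * a" and "t > 0" "s \<ge> 0" "q * lo\<^sub>0 \<ge> s"
    and "lo\<^sub>0 > 0" "hi\<^sub>1 > 0" "c \<ge> 0" "lo\<^sub>0 * a \<le> b" "c \<le> hi\<^sub>1 * b"
    and "p * hi\<^sub>1 * lo\<^sub>0 - q * lo\<^sub>0 + s \<le> t * hi\<^sub>2 * hi\<^sub>1 * lo\<^sub>0"
  shows "d \<le> hi\<^sub>2 * c"
proof -
  have "hi\<^sub>1 * lo\<^sub>0 * (t * (hi\<^sub>2 * c - d)) = s * hi\<^sub>1 * (b - lo\<^sub>0 * a)
      + (q * lo\<^sub>0 - s) * (hi\<^sub>1 * b - c) + c * (t * hi\<^sub>2 * hi\<^sub>1 * lo\<^sub>0 - (p * hi\<^sub>1 * lo\<^sub>0 - q * lo\<^sub>0 + s))"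
    using rec by algebra
  also have "\<dots> \<ge> 0" using assms by (intro add_nonneg_nonneg mult_nonneg_nonneg) auto
  finally show ?thesis
    using assms mult_pos_pos[OF \<open>hi\<^sub>1 > 0\<close> \<open>lo\<^sub>0 > 0\<close>] by (auto simp: zero_le_mult_iff)
qed

definition growth_rate :: real where
  "growth_rate = 3 + 2 * sqrt 2"

lemma growth_rate_ge_3: "growth_rate \<ge> 3"
  unfolding growth_rate_def by simp

lemma growth_rate_bounds: "5.8284 \<le> growth_rate" "growth_rate \<le> 5.8286"
proof -
  have "1.4142 \<le> sqrt 2" by (rule real_le_rsqrt) (simp add: power2_eq_square)
  moreover have "sqrt 2 \<le> 1.4143" by (rule real_le_lsqrt) (auto simp add: power2_eq_square)
  ultimately show "5.8284 \<le> growth_rate" "growth_rate \<le> 5.8286" unfolding growth_rate_def by auto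
qed

text \<open>The offsets are tuned so that the bracket [ratio_lo n, ratio_hi n] for \<rho>(n) holds at
  n = 8, 9 and is preserved by the recurrence from there on.\<close>

definition ratio_lo :: "real \<Rightarrow> real" where
  "ratio_lo x = growth_rate * (10 * x - 12) / (10 * x + 3)"

definition ratio_hi :: "real \<Rightarrow> real" where
  "ratio_hi x = growth_rate * (10 * x - 8) / (10 * x + 7)"

lemma ratio_lo_closes:
  assumes "x \<ge> 8"
  shows "(x + 3) * ratio_lo (x + 2) * ratio_lo (x + 1) * ratio_hi x
    \<le> (7 * x + 13) * ratio_lo (x + 1) * ratio_hi x - (7 * x + 15) * ratio_hi x + (x + 1)"
proof -
  define y where "y = x - 8"
  have denom_pos: "(x + 13/10) * (x + 7/10) * (x + 23/10) > 0" using assms by simp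
  have "ratio_lo (x + 1) * (10 * x + 13) = growth_rate * (10 * x - 2)"
    "ratio_hi x * (10 * x + 7) = growth_rate * (10 * x - 8)"
    "ratio_lo (x + 2) * (10 * x + 23) = growth_rate * (10 * x + 8)"
    "sqrt 2 * sqrt 2 = 2"
    using assms by (simp_all add: ratio_lo_def ratio_hi_def field_simps)
  then have "((7 * x + 13) * ratio_lo (x + 1) * ratio_hi x - (7 * x + 15) * ratio_hi x + (x + 1)
      - (x + 3) * ratio_lo (x + 2) * ratio_lo (x + 1) * ratio_hi x) * ((x + 13/10) * (x + 7/10) * (x + 23/10))
    = (184761/200 + 59886/125 * sqrt 2) + (78309/200 + 483/2 * sqrt 2) * y + (369/10 + 243/10 * sqrt 2) * y\<^sup>2"
    unfolding growth_rate_def y_def by algebra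
  also have "\<dots> \<ge> 0" using assms y_def by simp
  finally show ?thesis using denom_pos by (simp add: zero_le_mult_iff)
qed

lemma ratio_hi_closes:
  assumes "x \<ge> 8"
  shows "(7 * x + 13) * ratio_hi (x + 1) * ratio_lo x - (7 * x + 15) * ratio_lo x + (x + 1)
    \<le> (x + 3) * ratio_hi (x + 2) * ratio_hi (x + 1) * ratio_lo x"
proof -
  define y where "y = x - 8"
  have denom_pos: "(x + 17/10) * (x + 3/10) * (x + 27/10) > 0" using assms by simp
  have "ratio_hi (x + 1) * (10 * x + 17) = growth_rate * (10 * x + 2)"
    "ratio_lo x * (10 * x + 3) = growth_rate * (10 * x - 12)"
    "ratio_hi (x + 2) * (10 * x + 27) = growth_rate * (10 * x + 12)"
    "sqrt 2 * sqrt 2 = 2"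
    using assms by (simp_all add: ratio_lo_def ratio_hi_def field_simps)
  then have "((x + 3) * ratio_hi (x + 2) * ratio_hi (x + 1) * ratio_lo x
      - ((7 * x + 13) * ratio_hi (x + 1) * ratio_lo x - (7 * x + 15) * ratio_lo x + (x + 1)))
      * ((x + 17/10) * (x + 3/10) * (x + 27/10))
    = (55011/40 + 151521/125 * sqrt 2) + (55011/200 + 483/2 * sqrt 2) * y + (99/10 + 93/10 * sqrt 2) * y\<^sup>2"
    unfolding growth_rate_def y_def by algebra
  also have "\<dots> \<ge> 0" using assms y_def by simp
  finally show ?thesis using denom_pos by (simp add: zero_le_mult_iff)
qed

lemma ratio_lo_ge_1:
  assumes "x \<ge> 8" shows "ratio_lo x \<ge> 1"
proof -
  have "10 * x + 3 \<le> 3 * (10 * x - 12)" using assms by simp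
  also have "\<dots> \<le> growth_rate * (10 * x - 12)"
    using assms growth_rate_ge_3 by (intro mult_right_mono) auto
  finally show ?thesis unfolding ratio_lo_def using assms by simp
qed

lemma ratio_hi_ge_1:
  assumes "x \<ge> 8" shows "ratio_hi x \<ge> 1"
proof -
  have "10 * x + 7 \<le> 3 * (10 * x - 8)" using assms by simp
  also have "\<dots> \<le> growth_rate * (10 * x - 8)"
    using assms growth_rate_ge_3 by (intro mult_right_mono) auto
  finally show ?thesis unfolding ratio_hi_def using assms by simp
qed

lemma ratio_hi_le_ratio_lo_Suc:
  assumes "x \<ge> 8" shows "ratio_hi x \<le> ratio_lo (x + 1)"
proof -
  have "(10 * x - 8) / (10 * x + 7) \<le> (10 * (x + 1) - 12) / (10 * (x + 1) + 3)"
    using assms by (simp add: field_simps)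
  then have "growth_rate * ((10 * x - 8) / (10 * x + 7))
      \<le> growth_rate * ((10 * (x + 1) - 12) / (10 * (x + 1) + 3))"
    using growth_rate_ge_3 by (intro mult_left_mono) auto
  then show ?thesis unfolding ratio_hi_def ratio_lo_def by simp
qed

definition R_bracketed :: "nat \<Rightarrow> bool" where
  "R_bracketed m \<longleftrightarrow>
     R m > 0 \<and> ratio_lo m * R m \<le> R (m + 1) \<and> R (m + 1) \<le> ratio_hi m * R m"

lemma R_bracketed_8: "R_bracketed 8" and R_bracketed_9: "R_bracketed 9"
  unfolding R_bracketed_def ratio_lo_def ratio_hi_def
  using R_8 R_9 R_10 growth_rate_bounds by (simp_all add: field_simps)

lemma R_bracketed_step:
  assumes "m \<ge> 8" "R_bracketed m" "R_bracketed (m + 1)"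
  shows "R_bracketed (m + 2)"
proof -
  define x where "x = real m"
  have x: "x \<ge> 8" using assms(1) x_def by simp
  have bounds_m: "R m > 0" "ratio_lo x * R m \<le> R (m + 1)" "R (m + 1) \<le> ratio_hi x * R m"
    using assms(2) unfolding R_bracketed_def x_def by auto
  have bounds_Suc_m: "R (m + 1) > 0" "ratio_lo (x + 1) * R (m + 1) \<le> R (m + 2)"
    "R (m + 2) \<le> ratio_hi (x + 1) * R (m + 1)"
    using assms(3) unfolding R_bracketed_def x_def by (simp_all add: add.commute)
  have ge_1: "ratio_lo x \<ge> 1" "ratio_hi x \<ge> 1" "ratio_lo (x + 1) \<ge> 1" "ratio_hi (x + 1) \<ge> 1"
    using x ratio_lo_ge_1 ratio_hi_ge_1 by auto
  have pos: "R (m + 2) > 0"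
    using bounds_Suc_m ge_1(3) by (smt (verit) mult_le_cancel_right1)
  have coeff: "(7 * x + 15) * ratio_lo x \<ge> x + 1" "(7 * x + 15) * ratio_hi x \<ge> x + 1"
    using x ge_1 by (smt (verit) mult_le_cancel_left1)+
  have rec: "(x + 3) * R (m + 3) = (7 * x + 13) * R (m + 2) - (7 * x + 15) * R (m + 1) + (x + 1) * R m"
    using R_recurrence[of m] x_def by simp
  have "ratio_lo (x + 2) * R (m + 2) \<le> R (m + 3)"
    using recurrence_ratio_lower_step[OF rec _ _ _ _ _ _ bounds_m(3) bounds_Suc_m(2) ratio_lo_closes[OF x]]
      x ge_1 pos coeff by auto
  moreover have "R (m + 3) \<le> ratio_hi (x + 2) * R (m + 2)"
    using recurrence_ratio_upper_step[OF rec _ _ _ _ _ _ bounds_m(2) bounds_Suc_m(3) ratio_hi_closes[OF x]]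
      x ge_1 pos coeff by auto
  ultimately show ?thesis
    unfolding R_bracketed_def x_def using pos by (simp add: eval_nat_numeral add.commute)
qed

lemma R_bracketed: "m \<ge> 8 \<Longrightarrow> R_bracketed m"
proof -
  have "m \<ge> 8 \<Longrightarrow> R_bracketed m \<and> R_bracketed (m + 1)"
  proof (induction m rule: nat_induct_at_least)
    case (Suc m)
    then show ?case using R_bracketed_step[of m] by simp
  qed (use R_bracketed_8 R_bracketed_9 in simp)
  then show "m \<ge> 8 \<Longrightarrow> R_bracketed m" by blast
qed

lemma R_pos: "k \<ge> 1 \<Longrightarrow> R k > 0"
proof (cases "k \<ge> 8")
  case True
  then show ?thesis using R_bracketed unfolding R_bracketed_def by blast
next
  case False
  moreover assume "k \<ge> 1"
  ultimately have "k \<in> {1..7}" by auto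
  then show ?thesis using R_1 R_2 R_3 R_4 R_5 R_6 R_7 by (auto simp: atLeastAtMost_iff eval_nat_numeral le_Suc_eq)
qed

lemma succ_ratio_R_bounds:
  assumes "k \<ge> 8"
  shows "ratio_lo k \<le> succ_ratio R k" "succ_ratio R k \<le> ratio_hi k"
  using R_bracketed[OF assms] unfolding R_bracketed_def succ_ratio_def
  by (simp_all add: field_simps)

lemma succ_ratio_R_mono:
  assumes "k \<ge> 5"
  shows "succ_ratio R k \<le> succ_ratio R (Suc k)"
proof (cases "k \<ge> 8")
  case True
  have "succ_ratio R k \<le> ratio_hi k" using succ_ratio_R_bounds True by blast
  also have "\<dots> \<le> ratio_lo (k + 1)" using ratio_hi_le_ratio_lo_Suc[of k] True by (simp add: add.commute)
  also have "\<dots> \<le> succ_ratio R (Suc k)" using succ_ratio_R_bounds[of "Suc k"] True by simp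
  finally show ?thesis .
next
  case False
  with assms have "k \<in> {5, 6, 7}" by auto
  then show ?thesis
    unfolding succ_ratio_def using R_5 R_6 R_7 R_8 R_9 by (auto simp: eval_nat_numeral)
qed

lemma ratio_hi_Suc_div_ratio_lo:
  assumes "x \<ge> 8"
  shows "ratio_hi (x + 1) / ratio_lo x = 1 + 210 / ((10 * x + 17) * (10 * x - 12))"
proof -
  have "ratio_hi (x + 1) / ratio_lo x
      = (growth_rate * ((10 * x + 2) / (10 * x + 17))) / (growth_rate * ((10 * x - 12) / (10 * x + 3)))"
    by (simp add: ratio_hi_def ratio_lo_def algebra_simps)
  also have "\<dots> = ((10 * x + 2) / (10 * x + 17)) / ((10 * x - 12) / (10 * x + 3))"
    using growth_rate_ge_3 by simp
  also have "\<dots> = 1 + 210 / ((10 * x + 17) * (10 * x - 12))"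
    using assms mult_pos_pos[of "10 * x + 17" "10 * x - 12"] by (simp add: field_simps)
  finally show ?thesis .
qed

lemma succ_ratio_R_slow_growth:
  assumes "k \<ge> 5"
  shows "real k * (real k + 1) * (succ_ratio R (Suc k) / succ_ratio R k - 1) \<le> 23 / 10"
proof (cases "k \<ge> 8")
  case True
  define x where "x = real k"
  have x: "x \<ge> 8" using True x_def by simp
  have "succ_ratio R (Suc k) / succ_ratio R k \<le> ratio_hi (x + 1) / ratio_lo x"
    using succ_ratio_R_bounds[of k] succ_ratio_R_bounds[of "Suc k"] ratio_lo_ge_1[OF x]
      ratio_hi_ge_1[of "x + 1"]
      R_pos[of "Suc k"] R_pos[of "Suc (Suc k)"] True x_def
    by (intro frac_le) (auto simp: succ_ratio_def add.commute)
  then have "succ_ratio R (Suc k) / succ_ratio R k - 1 \<le> 210 / ((10 * x + 17) * (10 * x - 12))"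
    using ratio_hi_Suc_div_ratio_lo[OF x] by simp
  then have "x * (x + 1) * (succ_ratio R (Suc k) / succ_ratio R k - 1)
      \<le> x * (x + 1) * (210 / ((10 * x + 17) * (10 * x - 12)))"
    using x by (intro mult_left_mono) auto
  also have "\<dots> \<le> 23 / 10"
  proof -
    have "0 \<le> (x - 8) * (20 * x + 65)" using x by simp
    then have "x * (x + 1) * 210 \<le> 23 / 10 * ((10 * x + 17) * (10 * x - 12))"
      by (simp add: algebra_simps)
    then show ?thesis using x by (simp add: field_simps)
  qed
  finally show ?thesis using x_def by simp
next
  case False
  with assms have "k \<in> {5, 6, 7}" by auto
  then show ?thesis
    unfolding succ_ratio_def using R_5 R_6 R_7 R_8 R_9 by (auto simp: eval_nat_numeral)
qed

lemma log_root_gap_R_5: "log_root_gap R 5 > 23 / 20"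
proof -
  have "log_root_gap R 5 = ln ((1359::real) ^ 5 / 329 ^ 6)"
    using ln_realpow[of "1359::real" 5] ln_realpow[of "329::real" 6] ln_div[of "1359 ^ 5" "329 ^ 6"]
    by (simp add: log_root_gap_def R_5 R_6)
  also have "\<dots> \<ge> 2 - 3 / ((1359::real) ^ 5 / 329 ^ 6)" by (rule ln_ge_two_minus_three_div) simp
  finally show ?thesis by simp
qed

theorem theorem4p5:
  shows "strictly_log_concave_from 5 (\<lambda>n. root n (R n))"
  by (rule strictly_log_concave_roots_if_slow_ratio_growth[where c = "23 / 10"])
    (use R_pos succ_ratio_R_mono succ_ratio_R_slow_growth log_root_gap_R_5 in auto)

end
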